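(* Run the cluster decoder (exponential-growth version) on a layer code with an input Pauli-$X$ error $P$ supported on a set $B$ of qubits, and let $C_t$ denote the correction accumulated up to time $t$. Then $P\cdot C_t$ is supported within $\mathrm{Ball}(B,4^t+1)$.
   Context: Layer code: the Williamson–Baspin 3D code built from surface-code layers coupled along line defects. Decoding hypergraph $G$: one vertex per $Z$-check, one hyperedge per qubit containing the $Z$-checks acting on it. The graph metric $d_G$ on qubits is the distance in the dual hypergraph (two qubits adjacent when they share a $Z$-check); $\mathrm{Ball}(x,r)$ is the set of qubits at $d_G$-distance at most $r$ from $x$, and $\mathrm{Ball}(S,r)=\bigcup_{x\in S}\mathrm{Ball}(x,r)$. Cluster decoder: start with one single-vertex active cluster per excited vertex (violated $Z$-check); at steps $t=0,1,\dots$ grow each active cluster to graph radius $4^t$, merge overlapping active clusters, and for each active cluster $T$ that is correctable (some set of hyperedges contained in $T$ meets each excited vertex of $T$ an odd number of times and every other vertex of $T$ an even number of times) apply such a set of qubit flips and deactivate $T$; stop when no active clusters remain. *)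

theory Defs
  imports Main
begin

text \<open>Decoding hypergraph: chk q is the set of Z-checks (vertices) acting on
qubit q (i.e. the hyperedge of q). Pauli-X operators are sets of qubits;
products are symmetric differences.\<close>

definition symdiff :: "'a set \<Rightarrow> 'a set \<Rightarrow> 'a set" where
  "symdiff X Y = (X - Y) \<union> (Y - X)"

definition qadj :: "('q \<Rightarrow> 'c set) \<Rightarrow> ('q \<times> 'q) set" where
  "qadj chk = {(a, b). chk a \<inter> chk b \<noteq> {}}"

definition ball :: "('q \<Rightarrow> 'c set) \<Rightarrow> 'q \<Rightarrow> nat \<Rightarrow> 'q set" where
  "ball chk x r = {y. \<exists>n\<le>r. (x, y) \<in> qadj chk ^^ n}"

definition Ball :: "('q \<Rightarrow> 'c set) \<Rightarrow> 'q set \<Rightarrow> nat \<Rightarrow> 'q set" where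
  "Ball chk S r = (\<Union>x\<in>S. ball chk x r)"

definition syndrome :: "('q::finite \<Rightarrow> 'c set) \<Rightarrow> 'q set \<Rightarrow> 'c set" where
  "syndrome chk X = {c. odd (card {q \<in> X. c \<in> chk q})}"

text \<open>Region of a cluster with seed (excited) vertices E grown to radius r:
qubits within distance r of the hyperedges containing a seed vertex.\<close>
definition region :: "('q \<Rightarrow> 'c set) \<Rightarrow> 'c set \<Rightarrow> nat \<Rightarrow> 'q set" where
  "region chk E r = Ball chk {q. chk q \<inter> E \<noteq> {}} r"

definition corrects :: "('q::finite \<Rightarrow> 'c set) \<Rightarrow> 'q set \<Rightarrow> 'c set \<Rightarrow> 'q set \<Rightarrow> bool" where
  "corrects chk R s F \<longleftrightarrow> F \<subseteq> R \<and>
     (\<forall>v \<in> (\<Union>q\<in>R. chk q). odd (card {q \<in> F. v \<in> chk q}) \<longleftrightarrow> v \<in> s)"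

definition correctable :: "('q::finite \<Rightarrow> 'c set) \<Rightarrow> 'q set \<Rightarrow> 'c set \<Rightarrow> bool" where
  "correctable chk R s \<longleftrightarrow> (\<exists>F. corrects chk R s F)"

text \<open>Merging of active clusters (identified by their seed sets) whose
regions at radius 4^t overlap (transitively).\<close>
definition overlap :: "('q \<Rightarrow> 'c set) \<Rightarrow> nat \<Rightarrow> 'c set set \<Rightarrow> ('c set \<times> 'c set) set" where
  "overlap chk t A = {(E1, E2). E1 \<in> A \<and> E2 \<in> A \<and>
      region chk E1 (4 ^ t) \<inter> region chk E2 (4 ^ t) \<noteq> {}}"

definition merge :: "('q \<Rightarrow> 'c set) \<Rightarrow> nat \<Rightarrow> 'c set set \<Rightarrow> 'c set set" where
  "merge chk t A = (\<lambda>E. \<Union>{E' \<in> A. (E, E') \<in> (overlap chk t A)\<^sup>*}) ` A"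

text \<open>One step t of the decoder: grow to radius 4^t, merge, correct and
deactivate every correctable merged cluster (w.r.t. the current syndrome
of P times the accumulated correction C).\<close>
definition dec_step :: "('q::finite \<Rightarrow> 'c set) \<Rightarrow> 'q set \<Rightarrow> nat \<Rightarrow>
    'c set set \<Rightarrow> 'q set \<Rightarrow> 'c set set \<Rightarrow> 'q set \<Rightarrow> bool" where
  "dec_step chk P t A C A' C' \<longleftrightarrow>
    (let M = merge chk t A;
         s = syndrome chk (symdiff P C);
         D = {T \<in> M. correctable chk (region chk T (4 ^ t)) s}
     in \<exists>F :: 'c set \<Rightarrow> 'q set.
          (\<forall>T \<in> D. corrects chk (region chk T (4 ^ t)) s (F T)) \<and>
          C' = symdiff C {q. odd (card {T \<in> D. q \<in> F T})} \<and>
          A' = M - D)"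

text \<open>A run of the cluster decoder on input error P: act t are the active
clusters at the start of step t, cor t the correction accumulated before
step t (so C_t = cor (Suc t)).\<close>
definition cluster_run :: "('q::finite \<Rightarrow> 'c set) \<Rightarrow> 'q set \<Rightarrow>
    (nat \<Rightarrow> 'c set set) \<Rightarrow> (nat \<Rightarrow> 'q set) \<Rightarrow> bool" where
  "cluster_run chk P act cor \<longleftrightarrow>
     act 0 = (\<lambda>v. {v}) ` syndrome chk P \<and> cor 0 = {} \<and>
     (\<forall>t. dec_step chk P t (act t) (cor t) (act (Suc t)) (cor (Suc t)))"

end

theory Submission
  imports Defs
begin

text \<open>Every excited vertex of the syndrome of P lies on the hyperedge of a qubit of P, so a
cluster grown from such vertices to radius r stays inside Ball(P, r + 1). Merging only takes
unions of clusters, hence all active clusters keep consisting of excited vertices of P, and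
each step t flips only qubits inside Ball(P, 4^t + 1). As these balls increase with t, the
accumulated correction, and with it P \<cdot> C_t, lies in Ball(P, 4^t + 1) \<subseteq> Ball(B, 4^t + 1).\<close>

lemma symdiff_subset_Un: "symdiff X Y \<subseteq> X \<union> Y"
  unfolding symdiff_def by blast

lemma ball_mono: "r \<le> r' \<Longrightarrow> ball chk x r \<subseteq> ball chk x r'"
  unfolding ball_def by (auto intro: order_trans)

lemma Ball_mono: "S \<subseteq> S' \<Longrightarrow> r \<le> r' \<Longrightarrow> Ball chk S r \<subseteq> Ball chk S' r'"
  unfolding Ball_def by (rule UN_mono) (simp_all add: ball_mono)

lemma subset_Ball: "S \<subseteq> Ball chk S r"
  unfolding Ball_def ball_def by force

lemma odd_card_Collect_imp_bex: "odd (card {x \<in> A. P x}) \<Longrightarrow> \<exists>x\<in>A. P x"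
  by (metis (no_types, lifting) card.empty empty_Collect_eq even_zero)

lemma syndrome_subset_checks: "syndrome chk X \<subseteq> (\<Union>q\<in>X. chk q)"
proof
  fix c assume "c \<in> syndrome chk X"
  then have "\<exists>q\<in>X. c \<in> chk q"
    unfolding syndrome_def mem_Collect_eq by (rule odd_card_Collect_imp_bex)
  then show "c \<in> (\<Union>q\<in>X. chk q)" by blast
qed

lemma region_subset_Ball:
  assumes "E \<subseteq> (\<Union>p\<in>P. chk p)"
  shows "region chk E r \<subseteq> Ball chk P (Suc r)"
proof
  fix z assume "z \<in> region chk E r"
  then obtain q n where q: "chk q \<inter> E \<noteq> {}" and "n \<le> r" and qz: "(q, z) \<in> qadj chk ^^ n"
    unfolding region_def Ball_def ball_def by blast
  then obtain p where "p \<in> P" and pq: "(p, q) \<in> qadj chk"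
    using assms unfolding qadj_def by blast
  have "(p, z) \<in> qadj chk ^^ Suc n" using pq qz by (rule relpow_Suc_I2)
  with \<open>n \<le> r\<close> \<open>p \<in> P\<close> show "z \<in> Ball chk P (Suc r)"
    unfolding Ball_def ball_def by (blast intro: Suc_le_mono[THEN iffD2])
qed

lemma Union_merge_subset: "\<Union>(merge chk t A) \<subseteq> \<Union>A"
  unfolding merge_def by blast

lemma dec_step_active_subset: "dec_step chk P t A C A' C' \<Longrightarrow> A' \<subseteq> merge chk t A"
  unfolding dec_step_def Let_def by blast

lemma corrects_subset: "corrects chk R s F \<Longrightarrow> F \<subseteq> R"
  unfolding corrects_def by (rule conjunct1)

lemma dec_step_correction_subset:
  assumes "dec_step chk P t A C A' C'"
  shows "C' \<subseteq> C \<union> (\<Union>T\<in>merge chk t A. region chk T (4 ^ t))"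
proof -
  let ?s = "syndrome chk (symdiff P C)"
  let ?D = "{T \<in> merge chk t A. correctable chk (region chk T (4 ^ t)) ?s}"
  obtain F where F: "\<forall>T \<in> ?D. corrects chk (region chk T (4 ^ t)) ?s (F T)"
    and C': "C' = symdiff C {q. odd (card {T \<in> ?D. q \<in> F T})}"
    using assms unfolding dec_step_def Let_def by (elim exE conjE) (rule that)
  have "C' \<subseteq> C \<union> {q. odd (card {T \<in> ?D. q \<in> F T})}"
    unfolding C' by (rule symdiff_subset_Un)
  also have "{q. odd (card {T \<in> ?D. q \<in> F T})} \<subseteq> (\<Union>T\<in>?D. F T)"
  proof
    fix q assume "q \<in> {q. odd (card {T \<in> ?D. q \<in> F T})}"
    then have "odd (card {T \<in> ?D. q \<in> F T})" by (rule CollectD)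
    then have "\<exists>T\<in>?D. q \<in> F T" by (rule odd_card_Collect_imp_bex)
    then show "q \<in> (\<Union>T\<in>?D. F T)" by blast
  qed
  also have "\<dots> \<subseteq> (\<Union>T\<in>merge chk t A. region chk T (4 ^ t))"
  proof (rule UN_mono)
    fix T assume "T \<in> ?D"
    with F have "corrects chk (region chk T (4 ^ t)) ?s (F T)" by blast
    then show "F T \<subseteq> region chk T (4 ^ t)" by (rule corrects_subset)
  qed blast
  finally show ?thesis by blast
qed

lemma cluster_run_active_subset_syndrome:
  assumes "cluster_run chk P act cor"
  shows "\<Union>(act t) \<subseteq> syndrome chk P"
proof (induction t)
  case 0
  show ?case using assms unfolding cluster_run_def by auto
next
  case (Suc t)
  have "dec_step chk P t (act t) (cor t) (act (Suc t)) (cor (Suc t))"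
    using assms unfolding cluster_run_def by blast
  then have "\<Union>(act (Suc t)) \<subseteq> \<Union>(merge chk t (act t))"
    by (intro Union_mono dec_step_active_subset)
  also have "\<dots> \<subseteq> \<Union>(act t)"
    by (rule Union_merge_subset)
  finally show ?case using Suc by (rule order_trans)
qed

lemma cluster_run_step_correction_subset:
  assumes "cluster_run chk P act cor"
  shows "cor (Suc t) \<subseteq> cor t \<union> Ball chk P (4 ^ t + 1)"
proof -
  have "dec_step chk P t (act t) (cor t) (act (Suc t)) (cor (Suc t))"
    using assms unfolding cluster_run_def by blast
  then have step: "cor (Suc t) \<subseteq> cor t \<union> (\<Union>T\<in>merge chk t (act t). region chk T (4 ^ t))"
    by (rule dec_step_correction_subset)
  have "region chk T (4 ^ t) \<subseteq> Ball chk P (Suc (4 ^ t))" if "T \<in> merge chk t (act t)" for T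
  proof (rule region_subset_Ball)
    have "T \<subseteq> \<Union>(merge chk t (act t))"
      using that by (rule Union_upper)
    also have "\<dots> \<subseteq> \<Union>(act t)"
      by (rule Union_merge_subset)
    also have "\<dots> \<subseteq> syndrome chk P"
      using assms by (rule cluster_run_active_subset_syndrome)
    also have "\<dots> \<subseteq> (\<Union>p\<in>P. chk p)"
      by (rule syndrome_subset_checks)
    finally show "T \<subseteq> (\<Union>p\<in>P. chk p)" .
  qed
  with step show ?thesis by auto
qed

lemma cluster_run_correction_subset:
  assumes "cluster_run chk P act cor"
  shows "cor (Suc t) \<subseteq> Ball chk P (4 ^ t + 1)"
proof (induction t)
  case 0
  have "cor 0 = {}"
    using assms unfolding cluster_run_def by blast
  then show ?case
    using cluster_run_step_correction_subset[OF assms, of 0] by simp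
next
  case (Suc t)
  have "Ball chk P (4 ^ t + 1) \<subseteq> Ball chk P (4 ^ Suc t + 1)"
    by (rule Ball_mono) simp_all
  then show ?case
    using Suc cluster_run_step_correction_subset[OF assms, of "Suc t"] by blast
qed

theorem lemma8:
  fixes chk :: "'q::finite \<Rightarrow> 'c::finite set"
    and P B :: "'q set"
    and act :: "nat \<Rightarrow> 'c set set" and cor :: "nat \<Rightarrow> 'q set"
    and t :: nat
  assumes "P \<subseteq> B"
    and "cluster_run chk P act cor"
  shows "symdiff P (cor (Suc t)) \<subseteq> Ball chk B (4 ^ t + 1)"
proof -
  have "symdiff P (cor (Suc t)) \<subseteq> P \<union> cor (Suc t)"
    by (rule symdiff_subset_Un)
  also have "\<dots> \<subseteq> Ball chk P (4 ^ t + 1)"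
    using subset_Ball[of P chk] cluster_run_correction_subset[OF assms(2)] by blast
  also have "\<dots> \<subseteq> Ball chk B (4 ^ t + 1)"
    using assms(1) by (rule Ball_mono) simp
  finally show ?thesis .
qed

end
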